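(* For integers $K\ge 3$ and $1\le\ell\le K$, let $M(K,\ell)$ be the number of primitive cyclic compositions of $K$ into $\ell$ positive parts, and define $R(K)=2^{-K}\sum_{K/\log_2 3<\ell\le K} M(K,\ell)\bigl(\log_2 3-K/\ell\bigr)$. Then for each $K\ge 3$, $$R(K)\le(\log_2 3-1)\,\Pr\!\Bigl[\mathrm{Bin}(K-1,\tfrac12)\ge\lceil K/\log_2 3\rceil-1\Bigr].$$
   Context: A primitive cyclic composition of $K$ into $\ell$ parts is a rotation class of compositions $(k_1,\ldots,k_\ell)$ of $K$ into positive integers that is not fixed by any nontrivial cyclic rotation. $\mathrm{Bin}(K-1,1/2)$ is a binomial random variable. *)

theory Defs
  imports "HOL-Probability.Probability"
begin

definition compositions :: "nat \<Rightarrow> nat \<Rightarrow> nat list set" where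
  "compositions K l = {xs. length xs = l \<and> (\<forall>x\<in>set xs. 0 < x) \<and> sum_list xs = K}"

text \<open>Rotation class (cyclic composition) of a composition.\<close>
definition rot_class :: "nat list \<Rightarrow> nat list set" where
  "rot_class xs = {rotate i xs | i. True}"

definition primitive_comp :: "nat list \<Rightarrow> bool" where
  "primitive_comp xs \<longleftrightarrow> (\<forall>i. 0 < i \<and> i < length xs \<longrightarrow> rotate i xs \<noteq> xs)"

definition M :: "nat \<Rightarrow> nat \<Rightarrow> nat" where
  "M K l = card (rot_class ` {xs \<in> compositions K l. primitive_comp xs})"

definition R :: "nat \<Rightarrow> real" where
  "R K = 2 powr (- real K) *
     (\<Sum>l\<in>{l \<in> {1..K}. real K / log 2 3 < real l}.
        real (M K l) * (log 2 3 - real K / real l))"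

end

theory Submission
  imports Defs
begin

text \<open>Each rotation class is the image of one of its members, so M K l is at most the number of
  compositions of K into l parts, which by stars and bars is \<open>(K - 1) choose (l - 1)\<close>. For l in
  the range of the sum, \<open>log 2 3 - K / l\<close> lies in \<open>[0, log 2 3 - 1]\<close> and \<open>l - 1\<close> lies in the
  binomial tail. Since the tail probability is the tail sum of the \<open>(K - 1) choose k\<close> divided by
  \<open>2 ^ (K - 1)\<close>, summing over l even gives half the claimed bound.\<close>

lemma finite_compositions: "finite (compositions K l)"
proof -
  have "compositions K l \<subseteq> {xs. set xs \<subseteq> {0..K} \<and> length xs = l}"
    unfolding compositions_def using member_le_sum_list by fastforce
  then show ?thesis
    using finite_subset finite_lists_length_eq by blast
qed

lemma compositions_eq_map_Suc:
  assumes "l \<le> K"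
  shows "compositions K l = map Suc ` {xs. length xs = l \<and> sum_list xs = K - l}"
proof (intro equalityI subsetI)
  fix xs assume xs: "xs \<in> compositions K l"
  have "map (\<lambda>x. Suc (x - 1)) xs = xs"
    using xs by (auto simp: compositions_def intro: map_idI)
  then have "sum_list xs = sum_list (map (\<lambda>x. x - 1) xs) + length xs"
    by (metis sum_list_Suc)
  with xs have "map (\<lambda>x. x - 1) xs \<in> {xs. length xs = l \<and> sum_list xs = K - l}"
    by (auto simp: compositions_def)
  moreover have "xs = map Suc (map (\<lambda>x. x - 1) xs)"
    using \<open>map (\<lambda>x. Suc (x - 1)) xs = xs\<close> by (simp add: o_def)
  ultimately show "xs \<in> map Suc ` {xs. length xs = l \<and> sum_list xs = K - l}"
    by blast
next
  fix ys assume "ys \<in> map Suc ` {xs. length xs = l \<and> sum_list xs = K - l}"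
  then obtain xs where "ys = map Suc xs" "length xs = l" "sum_list xs = K - l"
    by blast
  then show "ys \<in> compositions K l"
    using assms sum_list_Suc[of "\<lambda>x. x" xs] by (auto simp: compositions_def)
qed

lemma card_compositions:
  assumes "1 \<le> l" "l \<le> K"
  shows "card (compositions K l) = (K - 1) choose (l - 1)"
proof -
  have "card (compositions K l) = card {xs :: nat list. length xs = l \<and> sum_list xs = K - l}"
    unfolding compositions_eq_map_Suc[OF \<open>l \<le> K\<close>]
    by (rule card_image) (simp add: inj_on_def)
  also have "\<dots> = (K - l + l - 1) choose (K - l)"
    by (rule card_length_sum_list)
  also have "\<dots> = (K - 1) choose (l - 1)"
    using assms binomial_symmetric[of "l - 1" "K - 1"] by simp
  finally show ?thesis .
qed

lemma M_le_binomial: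
  assumes "1 \<le> l" "l \<le> K"
  shows "M K l \<le> (K - 1) choose (l - 1)"
proof -
  have "M K l \<le> card {xs \<in> compositions K l. primitive_comp xs}"
    unfolding M_def by (rule card_image_le) (simp add: finite_compositions)
  also have "\<dots> \<le> card (compositions K l)"
    by (rule card_mono[OF finite_compositions]) auto
  finally show ?thesis
    using card_compositions[OF assms] by simp
qed

lemma M_weight_le_binomial:
  fixes c :: real
  assumes "1 \<le> l" "l \<le> K" "real K \<le> c * real l"
  shows "real (M K l) * (c - real K / real l) \<le> (c - 1) * real ((K - 1) choose (l - 1))"
proof -
  have "0 \<le> c - real K / real l"
    using assms by (simp add: field_simps)
  moreover have "c - real K / real l \<le> c - 1"
    using assms by simp
  moreover have "real (M K l) \<le> real ((K - 1) choose (l - 1))"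
    using M_le_binomial[OF assms(1,2)] by simp
  ultimately show ?thesis
    by (metis mult.commute mult_mono of_nat_0_le_iff)
qed

lemma R_le_binomial_tail_sum:
  "R K \<le> (log 2 3 - 1) *
     (\<Sum>k\<in>{k. real_of_int (\<lceil>real K / log 2 3\<rceil> - 1) \<le> real k} \<inter> {..K - 1}. real ((K - 1) choose k)) / 2 ^ K"
  (is "_ \<le> (?c - 1) * (\<Sum>k\<in>?T. ?b k) / _")
proof -
  define S where "S = {l \<in> {1..K}. real K / ?c < real l}"
  have "?c \<ge> 1" by simp
  have shift: "(\<lambda>l. l - 1) ` S \<subseteq> ?T"
  proof
    fix k assume "k \<in> (\<lambda>l. l - 1) ` S"
    then obtain l where l: "l \<in> S" "k = l - 1" by blast
    then have "\<lceil>real K / ?c\<rceil> \<le> int l"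
      by (simp add: S_def ceiling_le_iff)
    with l show "k \<in> ?T" by (auto simp: S_def)
  qed
  have "(\<Sum>l\<in>S. real (M K l) * (?c - real K / real l)) \<le> (\<Sum>l\<in>S. (?c - 1) * ?b (l - 1))"
  proof (rule sum_mono)
    fix l assume "l \<in> S"
    with \<open>?c \<ge> 1\<close> have "1 \<le> l" "l \<le> K" "real K \<le> ?c * real l"
      by (auto simp: S_def field_simps)
    then show "real (M K l) * (?c - real K / real l) \<le> (?c - 1) * ?b (l - 1)"
      by (rule M_weight_le_binomial)
  qed
  also have "\<dots> = (?c - 1) * (\<Sum>k\<in>(\<lambda>l. l - 1) ` S. ?b k)"
    by (subst sum.reindex) (auto simp: S_def inj_on_def sum_distrib_left)
  also have "\<dots> \<le> (?c - 1) * (\<Sum>k\<in>?T. ?b k)"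
    using shift \<open>?c \<ge> 1\<close> by (intro mult_left_mono sum_mono2) auto
  finally show ?thesis
    by (simp add: R_def S_def powr_minus powr_realpow divide_right_mono field_simps)
qed

lemma prob_binomial_half:
  "measure_pmf.prob (binomial_pmf n (1/2)) A = (\<Sum>k\<in>A \<inter> {..n}. real (n choose k)) / 2 ^ n"
proof -
  have "measure_pmf.prob (binomial_pmf n (1/2)) A
      = measure_pmf.prob (binomial_pmf n (1/2)) (A \<inter> {..n})"
    using measure_Int_set_pmf[of "binomial_pmf n (1/2)" A] by simp
  also have "\<dots> = (\<Sum>k\<in>A \<inter> {..n}. pmf (binomial_pmf n (1/2)) k)"
    by (rule measure_measure_pmf_finite) simp
  also have "\<dots> = (\<Sum>k\<in>A \<inter> {..n}. real (n choose k) / 2 ^ n)"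
  proof (rule sum.cong)
    fix k assume "k \<in> A \<inter> {..n}"
    then have "(1/2 :: real) ^ k * (1/2) ^ (n - k) = 1 / 2 ^ n"
      by (simp add: power_add[symmetric] power_one_over)
    then show "pmf (binomial_pmf n (1/2)) k = real (n choose k) / 2 ^ n"
      by (simp add: mult.assoc)
  qed simp
  finally show ?thesis
    by (simp add: sum_divide_distrib)
qed

theorem mainTheorem10:
  fixes K :: nat
  assumes "K \<ge> 3"
  shows "R K \<le> (log 2 3 - 1) *
           measure_pmf.prob (binomial_pmf (K - 1) (1/2))
             {k. real_of_int (\<lceil>real K / log 2 3\<rceil> - 1) \<le> real k}"
proof -
  define P where "P = measure_pmf.prob (binomial_pmf (K - 1) (1/2))
                        {k. real_of_int (\<lceil>real K / log 2 3\<rceil> - 1) \<le> real k}"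
  have "2 ^ K = 2 * (2 :: real) ^ (K - 1)"
    using assms by (simp flip: power_Suc)
  then have "R K \<le> (log 2 3 - 1) * P / 2"
    using R_le_binomial_tail_sum[of K] by (simp add: P_def prob_binomial_half)
  also have "\<dots> \<le> (log 2 3 - 1) * P"
    by (simp add: P_def)
  finally show ?thesis
    by (simp add: P_def)
qed

end
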